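(* Let $t_n=n(\log n)^{3/4}$. Then $$\lambda\Big(\#\{i\le n:\beta_i\ge t_n\}\ge 2\ \text{for infinitely many } n\Big)=0.$$
   Context: Let $\lambda$ be Lebesgue measure on $[0,1)$, $\tau(x)=2x\bmod1$, $\chi(x)=\lfloor1/x\rfloor$, $B=[1/2,1)$, $\phi(x)=\inf\{n\in\mathbb N_0:\tau^nx\in B\}+1$, $\tau_Bx=\tau^{\phi(x)}x$ (defined $\lambda$-a.e.), and $\beta_i=\chi\circ\tau_B^{\,i-1}$. Logarithms are natural. *)

theory Defs
  imports "HOL-Analysis.Analysis"
begin

definition tau :: "real \<Rightarrow> real" where
  "tau x = frac (2 * x)"

definition chi :: "real \<Rightarrow> nat" where
  "chi x = nat \<lfloor>1 / x\<rfloor>"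

definition Bset :: "real set" where
  "Bset = {1/2..<1}"

definition phi :: "real \<Rightarrow> nat" where
  "phi x = (LEAST n. (tau ^^ n) x \<in> Bset) + 1"

definition tauB :: "real \<Rightarrow> real" where
  "tauB x = (tau ^^ phi x) x"

definition beta :: "nat \<Rightarrow> real \<Rightarrow> nat" where
  "beta i x = chi ((tauB ^^ (i - 1)) x)"

definition tseq :: "nat \<Rightarrow> real" where
  "tseq n = real n * (ln (real n)) powr (3/4)"

end

theory Submission
  imports Defs
begin

text \<open>
  On the dyadic interval \<open>[2^-(k+1), 2^-k)\<close> the induced map \<open>tauB\<close> is the affine bijection
  \<open>x \<mapsto> 2^(k+1) x - 1\<close> onto \<open>[0,1)\<close>. Summing over the branches, preimages under \<open>tauB\<close>
  have no larger measure, and preimages intersected with \<open>[0,s]\<close> have measure at most \<open>2s\<close>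
  times the original. Hence the points whose orbit lies in \<open>[0,s]\<close> at two prescribed times
  form a set of measure at most \<open>2s\<^sup>2\<close>.

  A digit \<open>beta i x \<ge> t\<close> forces \<open>tauB^(i-1) x \<le> 1/t\<close>. So if two of the first \<open>n\<close> digits
  exceed \<open>t_n\<close>, where \<open>2^(k+1) \<le> n < 2^(k+2)\<close>, then \<open>x\<close> lies in one of \<open>4^(k+2)\<close> such
  sets with \<open>s = 1/t_(2^(k+1))\<close>, whose union has measure \<open>O(k^(-3/2))\<close>. This is summable in
  \<open>k\<close>, and the Borel--Cantelli lemma concludes.
\<close>

section \<open>The induced map on dyadic intervals\<close>

lemma dyadic_interval_exists:
  fixes x :: real
  assumes "0 < x" "x < 1"
  obtains k where "1 / 2 ^ (k + 1) \<le> x" "x < 1 / 2 ^ k"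
proof -
  obtain n where "(1 / 2) ^ n < x"
    using real_arch_pow_inv[OF assms(1)] by force
  moreover have "1 / 2 ^ (n + 1) \<le> (1 / 2 :: real) ^ n"
    by (simp add: power_one_over field_simps)
  ultimately have ex: "\<exists>n. 1 / 2 ^ (n + 1) \<le> x"
    by (intro exI[of _ n]) linarith
  define k where "k = (LEAST n. 1 / 2 ^ (n + 1) \<le> x)"
  have "1 / 2 ^ (k + 1) \<le> x"
    unfolding k_def by (rule LeastI_ex[OF ex])
  moreover have "x < 1 / 2 ^ k"
  proof (cases k)
    case 0
    then show ?thesis using assms by simp
  next
    case (Suc j)
    then have "\<not> 1 / 2 ^ (j + 1) \<le> x"
      using not_less_Least[of j "\<lambda>n. 1 / 2 ^ (n + 1) \<le> x"] by (simp add: k_def)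
    then show ?thesis using Suc by simp
  qed
  ultimately show ?thesis by (rule that)
qed

lemma dyadic_interval_scaled:
  fixes x :: real
  assumes "1 / 2 ^ (k + 1) \<le> x" "x < 1 / 2 ^ k"
  shows "0 \<le> x" "1 / 2 \<le> 2 ^ k * x" "2 ^ k * x < 1"
proof -
  show "0 \<le> x"
    using assms(1) order.trans[of 0 "1 / 2 ^ (k + 1)" x] by simp
  show "1 / 2 \<le> 2 ^ k * x"
    using assms(1) by (simp add: field_simps)
  show "2 ^ k * x < 1"
    using assms(2) by (simp add: field_simps)
qed

lemma funpow_tau_eq_mult_power:
  assumes "0 \<le> x" "2 ^ n * x < 1" "m \<le> n"
  shows "(tau ^^ m) x = 2 ^ m * x"
  using assms(3)
proof (induction m)
  case 0
  then show ?case by simp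
next
  case (Suc m)
  have "(2::real) ^ Suc m * x \<le> 2 ^ n * x"
    using Suc.prems assms(1) by (intro mult_right_mono power_increasing) auto
  then have "0 \<le> 2 * (2 ^ m * x)" "2 * (2 ^ m * x) < 1"
    using assms(1,2) by auto
  then show ?case
    using Suc by (simp add: tau_def frac_eq)
qed

lemma funpow_tau_zero [simp]: "(tau ^^ n) 0 = 0"
  by (induction n) (auto simp: tau_def)

lemma tauB_zero [simp]: "tauB 0 = 0"
  by (simp add: tauB_def)

lemma phi_dyadic:
  assumes "1 / 2 ^ (k + 1) \<le> x" "x < 1 / 2 ^ k"
  shows "phi x = k + 1"
proof -
  note x = dyadic_interval_scaled[OF assms]
  have iter: "(tau ^^ m) x = 2 ^ m * x" if "m \<le> k" for m
    using funpow_tau_eq_mult_power[OF x(1,3) that] .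
  have "(LEAST n. (tau ^^ n) x \<in> Bset) = k"
  proof (rule Least_equality)
    show "(tau ^^ k) x \<in> Bset"
      using iter[of k] x(2,3) by (simp add: Bset_def)
  next
    fix m assume m: "(tau ^^ m) x \<in> Bset"
    show "k \<le> m"
    proof (rule ccontr)
      assume "\<not> k \<le> m"
      then have "(2::real) ^ (m + 1) * x \<le> 2 ^ k * x"
        using x(1) by (intro mult_right_mono power_increasing) auto
      then show False
        using m iter[of m] x(3) \<open>\<not> k \<le> m\<close> by (simp add: Bset_def)
    qed
  qed
  then show ?thesis
    by (simp add: phi_def)
qed

lemma tauB_dyadic:
  assumes "1 / 2 ^ (k + 1) \<le> x" "x < 1 / 2 ^ k"
  shows "tauB x = 2 ^ (k + 1) * x - 1"
proof -
  note x = dyadic_interval_scaled[OF assms]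
  have "\<lfloor>2 * (2 ^ k * x)\<rfloor> = 1"
    using x(2,3) by (intro floor_unique) auto
  then show ?thesis
    using funpow_tau_eq_mult_power[OF x(1,3) order_refl]
    by (simp add: tauB_def phi_dyadic[OF assms] tau_def frac_def)
qed

lemma tauB_unit_interval:
  assumes "x \<in> {0..<1}"
  shows "tauB x \<in> {0..<1}"
proof (cases "x = 0")
  case False
  then obtain k where "1 / 2 ^ (k + 1) \<le> x" "x < 1 / 2 ^ k"
    using assms dyadic_interval_exists[of x] by auto
  then show ?thesis
    by (simp add: tauB_dyadic field_simps)
qed simp

lemma funpow_tauB_unit_interval: "x \<in> {0..<1} \<Longrightarrow> (tauB ^^ n) x \<in> {0..<1}"
proof (induction n)
  case (Suc n)
  then show ?case using tauB_unit_interval[OF Suc.IH] by simp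
qed simp

section \<open>Preimages under the induced map\<close>

definition tauB_branch :: "nat \<Rightarrow> real \<Rightarrow> real" where
  "tauB_branch k y = (y + 1) / 2 ^ (k + 1)"

lemma tauB_branch_dyadic:
  assumes "y \<in> {0..<1}"
  shows "1 / 2 ^ (k + 1) \<le> tauB_branch k y" "tauB_branch k y < 1 / 2 ^ k"
  using assms by (simp_all add: tauB_branch_def field_simps)

lemma tauB_tauB_branch:
  assumes "y \<in> {0..<1}"
  shows "tauB (tauB_branch k y) = y"
  using tauB_dyadic[OF tauB_branch_dyadic[OF assms]] by (simp add: tauB_branch_def)

lemma tauB_branch_tauB:
  assumes "1 / 2 ^ (k + 1) \<le> x" "x < 1 / 2 ^ k"
  shows "tauB_branch k (tauB x) = x"
  by (simp add: tauB_dyadic[OF assms] tauB_branch_def)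

lemma tauB_vimage_eq_branches:
  assumes "A \<subseteq> {0..<1}"
  shows "tauB -` A \<inter> {0..<1} = (tauB -` A \<inter> {0}) \<union> (\<Union>k. tauB_branch k ` A)"
proof (intro equalityI subsetI)
  fix x assume x: "x \<in> tauB -` A \<inter> {0..<1}"
  show "x \<in> (tauB -` A \<inter> {0}) \<union> (\<Union>k. tauB_branch k ` A)"
  proof (cases "x = 0")
    case False
    then obtain k where "1 / 2 ^ (k + 1) \<le> x" "x < 1 / 2 ^ k"
      using x dyadic_interval_exists[of x] by auto
    then have "x = tauB_branch k (tauB x)"
      by (simp add: tauB_branch_tauB)
    then show ?thesis using x by blast
  qed (use x in auto)
next
  fix x assume "x \<in> (tauB -` A \<inter> {0}) \<union> (\<Union>k. tauB_branch k ` A)"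
  then show "x \<in> tauB -` A \<inter> {0..<1}"
  proof (elim UnE UN_E imageE)
    fix k y assume y: "y \<in> A" and x: "x = tauB_branch k y"
    have y01: "y \<in> {0..<1}"
      using y assms by auto
    have "1 / 2 ^ (k + 1) \<le> x" "x < 1 / 2 ^ k"
      using tauB_branch_dyadic[OF y01] x by simp_all
    moreover have "(0::real) \<le> 1 / 2 ^ (k + 1)" "(1::real) / 2 ^ k \<le> 1"
      by simp_all
    ultimately have "0 \<le> x" "x < 1"
      by linarith+
    then show ?thesis
      using tauB_tauB_branch[OF y01] x y by simp
  qed auto
qed

lemma tauB_vimage_Int_subset_branches:
  "tauB -` A \<inter> {0..<1} \<inter> {..<1 / 2 ^ m} \<subseteq> {0} \<union> (\<Union>k. tauB_branch (k + m) ` A)"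
proof
  fix x assume x: "x \<in> tauB -` A \<inter> {0..<1} \<inter> {..<1 / 2 ^ m}"
  show "x \<in> {0} \<union> (\<Union>k. tauB_branch (k + m) ` A)"
  proof (cases "x = 0")
    case False
    with x have "0 < x" "x < 1"
      by auto
    then obtain j where j: "1 / 2 ^ (j + 1) \<le> x" "x < 1 / 2 ^ j"
      by (rule dyadic_interval_exists)
    moreover have "x < 1 / 2 ^ m"
      using x by simp
    ultimately have "(1::real) / 2 ^ (j + 1) < 1 / 2 ^ m"
      by linarith
    then have "m \<le> j"
      by (simp add: field_simps flip: power_Suc)
    then have "x = tauB_branch ((j - m) + m) (tauB x)"
      using tauB_branch_tauB[OF j] by simp
    then show ?thesis using x by blast
  qed simp
qed

lemma tauB_branch_image_eq_vimage:
  "tauB_branch k ` A = (\<lambda>x. - 1 + 2 ^ (k + 1) * x) -` A"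
proof (intro set_eqI iffI)
  fix x assume "x \<in> (\<lambda>x. - 1 + 2 ^ (k + 1) * x) -` A"
  moreover have "x = tauB_branch k (- 1 + 2 ^ (k + 1) * x)"
    by (simp add: tauB_branch_def field_simps)
  ultimately show "x \<in> tauB_branch k ` A"
    by (metis image_eqI vimageE)
qed (auto simp: tauB_branch_def field_simps)

lemma sets_tauB_branch_image:
  assumes "A \<in> sets lebesgue"
  shows "tauB_branch k ` A \<in> sets lebesgue"
proof -
  have "(\<lambda>x. - 1 + 2 ^ (k + 1) * x :: real) \<in> lebesgue \<rightarrow>\<^sub>M lebesgue"
    using lebesgue_affine_measurable[where c = "\<lambda>_::real. 2 ^ (k + 1)" and t = "- 1"]
    by (simp add: algebra_simps)
  from measurable_sets[OF this assms] show ?thesis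
    by (simp add: tauB_branch_image_eq_vimage)
qed

lemma emeasure_tauB_branch_image:
  "emeasure lebesgue (tauB_branch k ` A) = ennreal (1 / 2 ^ (k + 1)) * emeasure lebesgue A"
proof -
  have "tauB_branch k = (\<lambda>y. (1 / 2 ^ (k + 1)) *\<^sub>R y + 1 / 2 ^ (k + 1))"
    by (auto simp: fun_eq_iff tauB_branch_def field_simps)
  then show ?thesis
    using emeasure_lebesgue_affine[of "1 / 2 ^ (k + 1)" "1 / 2 ^ (k + 1)" A] by simp
qed

lemma sets_tauB_vimage:
  assumes "A \<in> sets lebesgue"
  shows "tauB -` A \<inter> {0..<1} \<in> sets lebesgue"
proof -
  have "tauB -` A \<inter> {0..<1} = tauB -` (A \<inter> {0..<1}) \<inter> {0..<1}"
    using tauB_unit_interval by blast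
  also have "\<dots> = (tauB -` (A \<inter> {0..<1}) \<inter> {0}) \<union> (\<Union>k. tauB_branch k ` (A \<inter> {0..<1}))"
    by (rule tauB_vimage_eq_branches) simp
  also have "\<dots> \<in> sets lebesgue"
  proof (rule sets.Un)
    have "tauB -` (A \<inter> {0..<1}) \<inter> {0} \<in> null_sets lebesgue"
      by (rule completion.complete2[of _ "{0}"]) simp_all
    then show "tauB -` (A \<inter> {0..<1}) \<inter> {0} \<in> sets lebesgue"
      by (rule null_setsD2)
    have "A \<inter> {0..<1} \<in> sets lebesgue"
      by (rule sets.Int[OF assms]) simp
    then show "(\<Union>k. tauB_branch k ` (A \<inter> {0..<1})) \<in> sets lebesgue"
      using sets_tauB_branch_image by blast
  qed
  finally show ?thesis .
qed

lemma sums_inverse_power2_shift: "(\<lambda>k. 1 / 2 ^ (k + m + 1) :: real) sums (1 / 2 ^ m)"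
proof -
  have "(\<lambda>k. 1 / 2 ^ (m + 1) * (1 / 2) ^ k :: real) sums (1 / 2 ^ (m + 1) * 2)"
    using geometric_sums[of "1 / 2 :: real"] by (intro sums_mult) simp
  then show ?thesis
    by (simp add: power_add power_one_over ac_simps)
qed

lemma emeasure_tauB_vimage_Int_le:
  assumes "A \<in> sets lebesgue"
  shows "emeasure lebesgue (tauB -` A \<inter> {0..<1} \<inter> {..<1 / 2 ^ m})
    \<le> ennreal (1 / 2 ^ m) * emeasure lebesgue A"
proof -
  have branches: "(\<Union>k. tauB_branch (k + m) ` A) \<in> sets lebesgue"
    using sets_tauB_branch_image[OF assms] by blast
  have "emeasure lebesgue (tauB -` A \<inter> {0..<1} \<inter> {..<1 / 2 ^ m})
      \<le> emeasure lebesgue ((\<Union>k. tauB_branch (k + m) ` A) \<union> {0})"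
    using tauB_vimage_Int_subset_branches branches
    by (intro emeasure_mono) (auto intro: sets.insert_in_sets)
  also have "\<dots> = emeasure lebesgue (\<Union>k. tauB_branch (k + m) ` A)"
    using branches by (intro emeasure_Un_null_set) auto
  also have "\<dots> \<le> (\<Sum>k. emeasure lebesgue (tauB_branch (k + m) ` A))"
    using sets_tauB_branch_image[OF assms] by (intro emeasure_subadditive_countably) auto
  also have "\<dots> = (\<Sum>k. ennreal (1 / 2 ^ (k + m + 1))) * emeasure lebesgue A"
    by (simp add: emeasure_tauB_branch_image ennreal_suminf_multc add.assoc)
  also have "(\<Sum>k. ennreal (1 / 2 ^ (k + m + 1))) = ennreal (1 / 2 ^ m)"
    by (rule suminf_ennreal_eq[OF _ sums_inverse_power2_shift]) simp
  finally show ?thesis .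
qed

lemma emeasure_tauB_vimage_le:
  "A \<in> sets lebesgue \<Longrightarrow> emeasure lebesgue (tauB -` A \<inter> {0..<1}) \<le> emeasure lebesgue A"
  using emeasure_tauB_vimage_Int_le[of A 0] by (simp add: Int_absorb2 subset_eq)

lemma emeasure_tauB_vimage_Int_atMost_le:
  assumes "A \<in> sets lebesgue" "0 < s"
  shows "emeasure lebesgue (tauB -` A \<inter> {0..<1} \<inter> {..s}) \<le> ennreal (2 * s) * emeasure lebesgue A"
proof (cases "s < 1")
  case True
  then obtain m where m: "1 / 2 ^ (m + 1) \<le> s" "s < 1 / 2 ^ m"
    using assms(2) dyadic_interval_exists by blast
  have "emeasure lebesgue (tauB -` A \<inter> {0..<1} \<inter> {..s})
      \<le> emeasure lebesgue (tauB -` A \<inter> {0..<1} \<inter> {..<1 / 2 ^ m})"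
    using m(2) sets_tauB_vimage[OF assms(1)] by (intro emeasure_mono) auto
  also have "\<dots> \<le> ennreal (1 / 2 ^ m) * emeasure lebesgue A"
    by (rule emeasure_tauB_vimage_Int_le[OF assms(1)])
  also have "\<dots> \<le> ennreal (2 * s) * emeasure lebesgue A"
    using m(1) by (intro mult_right_mono ennreal_leI) (auto simp: field_simps)
  finally show ?thesis .
next
  case False
  have "emeasure lebesgue (tauB -` A \<inter> {0..<1} \<inter> {..s}) \<le> emeasure lebesgue (tauB -` A \<inter> {0..<1})"
    using sets_tauB_vimage[OF assms(1)] by (intro emeasure_mono) auto
  also have "\<dots> \<le> ennreal 1 * emeasure lebesgue A"
    using emeasure_tauB_vimage_le[OF assms(1)] by simp
  also have "\<dots> \<le> ennreal (2 * s) * emeasure lebesgue A"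
    using False by (intro mult_right_mono ennreal_leI) auto
  finally show ?thesis .
qed

lemma funpow_tauB_vimage_Suc:
  "(tauB ^^ Suc n) -` A \<inter> {0..<1} = tauB -` ((tauB ^^ n) -` A \<inter> {0..<1}) \<inter> {0..<1}"
  using tauB_unit_interval by (auto simp: funpow_swap1)

lemma sets_funpow_tauB_vimage:
  assumes "A \<in> sets lebesgue"
  shows "(tauB ^^ n) -` A \<inter> {0..<1} \<in> sets lebesgue"
proof (induction n)
  case 0
  show ?case
    using sets.Int[OF assms, of "{0..<1}"] by simp
next
  case (Suc n)
  then show ?case
    unfolding funpow_tauB_vimage_Suc by (rule sets_tauB_vimage)
qed

lemma emeasure_funpow_tauB_vimage_le:
  assumes "A \<in> sets lebesgue"
  shows "emeasure lebesgue ((tauB ^^ n) -` A \<inter> {0..<1}) \<le> emeasure lebesgue A"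
proof (induction n)
  case 0
  show ?case
    using emeasure_mono[OF Int_lower1 assms] by simp
next
  case (Suc n)
  then show ?case
    unfolding funpow_tauB_vimage_Suc
    using emeasure_tauB_vimage_le[OF sets_funpow_tauB_vimage[OF assms]] order_trans by blast
qed

section \<open>Two visits to a short initial interval\<close>

definition visits_twice :: "nat \<Rightarrow> nat \<Rightarrow> real \<Rightarrow> real set" where
  "visits_twice a d s = {x \<in> {0..<1}. (tauB ^^ a) x \<le> s \<and> (tauB ^^ (a + d + 1)) x \<le> s}"

lemma visits_twice_eq_vimage:
  "visits_twice a d s =
    (tauB ^^ a) -` (tauB -` ((tauB ^^ d) -` {0..s} \<inter> {0..<1}) \<inter> {0..<1} \<inter> {..s}) \<inter> {0..<1}"
proof -
  have "(tauB ^^ (a + d + 1)) x = (tauB ^^ d) (tauB ((tauB ^^ a) x))" for x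
  proof -
    have "a + d + 1 = d + Suc a"
      by simp
    then show ?thesis
      by (simp only: funpow_add funpow_Suc_right comp_apply funpow_swap1)
  qed
  then show ?thesis
    using funpow_tauB_unit_interval tauB_unit_interval by (auto simp: visits_twice_def)
qed

lemma sets_visits_twice: "visits_twice a d s \<in> sets lebesgue"
  unfolding visits_twice_eq_vimage
  by (intro sets_funpow_tauB_vimage sets.Int sets_tauB_vimage) auto

lemma emeasure_visits_twice_le:
  assumes "0 < s"
  shows "emeasure lebesgue (visits_twice a d s) \<le> ennreal (2 * s\<^sup>2)"
proof -
  define B where "B = (tauB ^^ d) -` {0..s} \<inter> {0..<1}"
  have B: "B \<in> sets lebesgue"
    unfolding B_def by (intro sets_funpow_tauB_vimage) simp
  have "emeasure lebesgue (visits_twice a d s) \<le> emeasure lebesgue (tauB -` B \<inter> {0..<1} \<inter> {..s})"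
    unfolding visits_twice_eq_vimage B_def[symmetric]
    by (intro emeasure_funpow_tauB_vimage_le sets.Int sets_tauB_vimage B) simp
  also have "\<dots> \<le> ennreal (2 * s) * emeasure lebesgue B"
    by (rule emeasure_tauB_vimage_Int_atMost_le[OF B assms])
  also have "\<dots> \<le> ennreal (2 * s) * emeasure lebesgue {0..s}"
    unfolding B_def by (intro mult_left_mono emeasure_funpow_tauB_vimage_le) auto
  also have "\<dots> = ennreal (2 * s\<^sup>2)"
    using assms by (simp add: ennreal_mult power2_eq_square mult.assoc)
  finally show ?thesis .
qed

section \<open>Borel--Cantelli over dyadic blocks\<close>

lemma le_inverse_if_chi_ge:
  assumes "0 \<le> y" "0 < t" "t \<le> real (chi y)"
  shows "y \<le> 1 / t"
proof -
  have "0 < real (chi y)"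
    using assms(2,3) by linarith
  then have pos: "0 < \<lfloor>1 / y\<rfloor>"
    by (simp add: chi_def)
  have "t \<le> of_int \<lfloor>1 / y\<rfloor>"
    using assms(3) of_nat_nat[where 'a = real, OF less_imp_le[OF pos]]
    unfolding chi_def by linarith
  also have "\<dots> \<le> 1 / y"
    by (rule of_int_floor_le)
  finally have "t \<le> 1 / y" .
  moreover from this have "0 < y"
    using assms(1,2) by (cases "y = 0") auto
  ultimately show ?thesis
    using assms(2) by (simp add: field_simps)
qed

lemma tseq_pos: "2 \<le> n \<Longrightarrow> 0 < tseq n"
  by (simp add: tseq_def)

lemma tseq_mono:
  assumes "1 \<le> m" "m \<le> n"
  shows "tseq m \<le> tseq n"
proof -
  have "ln (real m) powr (3 / 4) \<le> ln (real n) powr (3 / 4)"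
    using assms by (intro powr_mono2) auto
  then show ?thesis
    unfolding tseq_def using assms by (intro mult_mono) auto
qed

lemma tseq_power2: "tseq (2 ^ j) = 2 ^ j * (real j * ln 2) powr (3 / 4)"
  by (simp add: tseq_def ln_realpow)

definition dyadic_block_set :: "nat \<Rightarrow> real set" where
  "dyadic_block_set k = (\<Union>a<2 ^ (k + 2). \<Union>d<2 ^ (k + 2). visits_twice a d (1 / tseq (2 ^ (k + 1))))"

lemma sets_dyadic_block_set: "dyadic_block_set k \<in> sets lebesgue"
  unfolding dyadic_block_set_def by (intro sets.finite_UN sets_visits_twice) auto

lemma emeasure_dyadic_block_set_le:
  "emeasure lebesgue (dyadic_block_set k) \<le> ennreal (8 * (real (k + 1) * ln 2) powr (- 3 / 2))"
proof -
  define N :: nat where "N = 2 ^ (k + 2)"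
  define L where "L = real (k + 1) * ln 2"
  define s where "s = 1 / tseq (2 ^ (k + 1))"
  have L: "0 < L"
    by (simp add: L_def)
  have s: "0 < s"
    unfolding s_def by (intro divide_pos_pos tseq_pos) (auto simp: self_le_power)
  have sets_UN: "(\<Union>d<N. visits_twice a d s) \<in> sets lebesgue" for a
    by (intro sets.finite_UN sets_visits_twice) auto
  have "emeasure lebesgue (dyadic_block_set k) \<le> (\<Sum>a<N. emeasure lebesgue (\<Union>d<N. visits_twice a d s))"
    unfolding dyadic_block_set_def N_def[symmetric] s_def[symmetric]
    using sets_UN by (intro emeasure_subadditive_finite) auto
  also have "\<dots> \<le> (\<Sum>a<N. \<Sum>d<N. emeasure lebesgue (visits_twice a d s))"
    by (intro sum_mono emeasure_subadditive_finite) (auto intro: sets_visits_twice)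
  also have "\<dots> \<le> (\<Sum>a<N. \<Sum>d<N. ennreal (2 * s\<^sup>2))"
    by (intro sum_mono emeasure_visits_twice_le s)
  also have "\<dots> = ennreal (real N * real N * (2 * s\<^sup>2))"
    by (simp add: ennreal_mult ennreal_of_nat_eq_real_of_nat mult.assoc)
  also have "real N * real N * (2 * s\<^sup>2) = 8 / (L powr (3 / 4))\<^sup>2"
    unfolding N_def s_def L_def tseq_power2 by (simp add: field_simps power2_eq_square power_add)
  also have "(L powr (3 / 4))\<^sup>2 = L powr (3 / 2)"
    using L by (simp add: powr_power)
  also have "8 / L powr (3 / 2) = 8 * L powr (- 3 / 2)"
    using powr_minus_divide[of L "3 / 2"] by simp
  finally show ?thesis
    by (simp add: L_def)
qed

lemma summable_dyadic_block_bound: "summable (\<lambda>k. 8 * (real (k + 1) * ln 2) powr (- 3 / 2))"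
proof -
  have "summable (\<lambda>k. real (k + 1) powr (- 3 / 2))"
    using summable_iff_shift[of "\<lambda>n. real n powr (- 3 / 2)" 1] summable_real_powr_iff by simp
  then have "summable (\<lambda>k. 8 * ln 2 powr (- 3 / 2) * real (k + 1) powr (- 3 / 2))"
    by (rule summable_mult)
  then show ?thesis
    by (simp add: powr_mult mult_ac)
qed

lemma mem_dyadic_block_set:
  assumes x: "x \<in> {0..<1}" and n: "2 ^ (k + 1) \<le> n" "n < 2 ^ (k + 2)"
    and two: "card {i \<in> {1..n}. real (beta i x) \<ge> tseq n} \<ge> 2"
  shows "x \<in> dyadic_block_set k"
proof -
  define S where "S = {i \<in> {1..n}. real (beta i x) \<ge> tseq n}"
  define t where "t = tseq (2 ^ (k + 1))"
  have "\<not> card S \<le> Suc 0"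
    using two by (simp add: S_def)
  then obtain i j where "i \<in> S" "j \<in> S" "i \<noteq> j"
    using card_le_Suc0_iff_eq[of S] by (auto simp: S_def)
  then obtain i j where ij: "i \<in> S" "j \<in> S" "i < j"
    by (metis linorder_neq_iff)
  have t: "0 < t" "t \<le> tseq n"
    unfolding t_def using n by (auto intro!: tseq_pos tseq_mono simp: self_le_power)
  have close: "(tauB ^^ (l - 1)) x \<le> 1 / t" if "l \<in> S" for l
  proof (rule le_inverse_if_chi_ge[OF _ t(1)])
    show "0 \<le> (tauB ^^ (l - 1)) x"
      using funpow_tauB_unit_interval[OF x] by simp
    show "t \<le> real (chi ((tauB ^^ (l - 1)) x))"
      using that t(2) by (simp add: S_def beta_def)
  qed
  define a where "a = i - 1"
  define d where "d = j - i - 1"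
  have ad: "a < 2 ^ (k + 2)" "d < 2 ^ (k + 2)" "a + d + 1 = j - 1"
    using ij n by (auto simp: S_def a_def d_def)
  have "(tauB ^^ a) x \<le> 1 / t"
    using close[OF ij(1)] by (simp only: a_def)
  moreover have "(tauB ^^ (a + d + 1)) x \<le> 1 / t"
    using close[OF ij(2)] by (simp only: ad(3))
  ultimately have "x \<in> visits_twice a d (1 / t)"
    using x by (simp add: visits_twice_def)
  with ad(1,2) show ?thesis
    unfolding dyadic_block_set_def t_def by blast
qed

lemma bad_set_subset_limsup:
  "{x \<in> {0..<1::real}. \<exists>\<^sub>\<infinity> n. card {i \<in> {1..n}. real (beta i x) \<ge> tseq n} \<ge> 2}
    \<subseteq> limsup dyadic_block_set"
proof
  fix x assume "x \<in> {x \<in> {0..<1::real}. \<exists>\<^sub>\<infinity> n. card {i \<in> {1..n}. real (beta i x) \<ge> tseq n} \<ge> 2}"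
  then have x: "x \<in> {0..<1}"
    and bad: "\<forall>m. \<exists>n\<ge>m. card {i \<in> {1..n}. real (beta i x) \<ge> tseq n} \<ge> 2"
    by (auto simp: INFM_nat_le)
  have "\<exists>k\<ge>K. x \<in> dyadic_block_set k" for K
  proof -
    obtain n where n: "2 ^ (K + 1) \<le> n" and card: "card {i \<in> {1..n}. real (beta i x) \<ge> tseq n} \<ge> 2"
      using bad by blast
    obtain j where j: "2 ^ j \<le> n" "n < 2 ^ (j + 1)"
      using ex_power_ivl1[of 2 n] n order.trans[OF one_le_power[of 2 "K + 1"] n] by auto
    have "(2::nat) ^ (K + 1) < 2 ^ (j + 1)"
      using n j(2) by linarith
    then have "K + 1 \<le> j"
      by simp
    then have "x \<in> dyadic_block_set (j - 1)"
      using j by (intro mem_dyadic_block_set[OF x _ _ card]) simp_all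
    with \<open>K + 1 \<le> j\<close> show ?thesis
      by (intro exI[of _ "j - 1"]) simp
  qed
  then show "x \<in> limsup dyadic_block_set"
    by (auto simp: limsup_INF_SUP)
qed

theorem mainTheorem12:
  shows "{x \<in> {0..<1::real}. \<exists>\<^sub>\<infinity> n.
            card {i \<in> {1..n}. real (beta i x) \<ge> tseq n} \<ge> 2} \<in> null_sets lebesgue"
proof -
  have finite: "emeasure lebesgue (dyadic_block_set k) < \<infinity>" for k
    using emeasure_dyadic_block_set_le[of k] by (rule le_less_trans) simp
  have "measure lebesgue (dyadic_block_set k) \<le> 8 * (real (k + 1) * ln 2) powr (- 3 / 2)" for k
    unfolding measure_def by (intro enn2real_leI emeasure_dyadic_block_set_le) simp
  then have "summable (\<lambda>k. measure lebesgue (dyadic_block_set k))"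
    by (intro summable_comparison_test'[OF summable_dyadic_block_bound]) simp
  then have "limsup dyadic_block_set \<in> null_sets lebesgue"
    by (rule borel_cantelli_limsup1[OF sets_dyadic_block_set finite])
  then show ?thesis
    by (rule completion.complete2[OF bad_set_subset_limsup])
qed

end
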